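(* Let $F$ be a graph and let $(G,\varphi)$ and $(H,\phi)$ be two $k$-token reconstructions of $F$. Then $G\simeq H$ if and only if there exists an automorphism $\psi$ of $F$ such that $\mathcal{R}_\phi=\{\psi(X):X\in\mathcal{R}_\varphi\}$.
   Context: $F_k(G)$ is the graph on the $k$-subsets of $V(G)$ with $A,B$ adjacent iff $A\triangle B$ is an edge of $G$. A $k$-token reconstruction of $F$ is a pair $(G',\varphi)$ with $\varphi$ an isomorphism $F\to F_k(G')$. For $u\in V(G)$, $\kappa_G(u,k)=\{A\in V(F_k(G)):u\in A\}$, and for a reconstruction $(G,\varphi)$, $\mathcal{R}_\varphi=\{\varphi^{-1}(\kappa_G(u,k)):u\in V(G)\}$ (similarly $\mathcal{R}_\phi=\{\phi^{-1}(\kappa_H(u,k)):u\in V(H)\}$). *)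

theory Defs
  imports Main
begin

definition graph :: "'a set \<Rightarrow> 'a set set \<Rightarrow> bool" where
  "graph V E \<longleftrightarrow> finite V \<and> (\<forall>e\<in>E. e \<subseteq> V \<and> card e = 2)"

definition graph_iso ::
  "'a set \<Rightarrow> 'a set set \<Rightarrow> 'b set \<Rightarrow> 'b set set \<Rightarrow> ('a \<Rightarrow> 'b) \<Rightarrow> bool" where
  "graph_iso V1 E1 V2 E2 f \<longleftrightarrow> bij_betw f V1 V2 \<and>
     (\<forall>x\<in>V1. \<forall>y\<in>V1. {x, y} \<in> E1 \<longleftrightarrow> {f x, f y} \<in> E2)"

definition graph_isomorphic ::
  "'a set \<Rightarrow> 'a set set \<Rightarrow> 'b set \<Rightarrow> 'b set set \<Rightarrow> bool" where
  "graph_isomorphic V1 E1 V2 E2 \<longleftrightarrow> (\<exists>f. graph_iso V1 E1 V2 E2 f)"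

definition token_vertices :: "'a set \<Rightarrow> nat \<Rightarrow> 'a set set" where
  "token_vertices V k = {A. A \<subseteq> V \<and> card A = k}"

definition token_edges :: "'a set \<Rightarrow> 'a set set \<Rightarrow> nat \<Rightarrow> 'a set set set" where
  "token_edges V E k = {{A, B} | A B. A \<in> token_vertices V k \<and> B \<in> token_vertices V k
       \<and> (A - B) \<union> (B - A) \<in> E}"

definition token_reconstruction ::
  "'f set \<Rightarrow> 'f set set \<Rightarrow> nat \<Rightarrow> 'a set \<Rightarrow> 'a set set \<Rightarrow> ('f \<Rightarrow> 'a set) \<Rightarrow> bool" where
  "token_reconstruction VF EF k V E phi \<longleftrightarrow> graph V E \<and>
     graph_iso VF EF (token_vertices V k) (token_edges V E k) phi"

definition kappa :: "'a set \<Rightarrow> nat \<Rightarrow> 'a \<Rightarrow> 'a set set" where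
  "kappa V k u = {A \<in> token_vertices V k. u \<in> A}"

definition recon_sets :: "'f set \<Rightarrow> nat \<Rightarrow> 'a set \<Rightarrow> ('f \<Rightarrow> 'a set) \<Rightarrow> 'f set set" where
  "recon_sets VF k V phi = {{x \<in> VF. phi x \<in> kappa V k u} | u. u \<in> V}"

end

theory Submission
  imports Defs
begin

text \<open>An isomorphism f from G to H acts on k-sets by images; transporting this action along
  the two reconstructions gives an automorphism psi of F with phi (psi x) = f ` varphi x, and psi
  maps the preimage of kappa(u) to that of kappa(f u). Conversely, if psi maps the family
  R_varphi onto R_phi, it maps the class of each vertex u of G to the class of some vertex f u of
  H. As 1 \<le> k < |V(G)|, the classes separate vertices, so f is injective, and again
  phi (psi x) = f ` varphi x. Every pair {u, v} is the symmetric difference of two k-sets A and B,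
  and the images of A and B have symmetric difference {f u, f v}; since psi preserves adjacency of
  tokens, f preserves adjacency of vertices.\<close>

lemma doubleton_in_token_edges_iff:
  assumes "A \<in> token_vertices V k" "B \<in> token_vertices V k"
  shows "{A, B} \<in> token_edges V E k \<longleftrightarrow> sym_diff A B \<in> E"
proof
  assume "{A, B} \<in> token_edges V E k"
  then obtain A' B' where AB: "{A, B} = {A', B'}" and "sym_diff A' B' \<in> E"
    unfolding token_edges_def mem_Collect_eq by (elim exE conjE) (rule that)
  moreover from AB have "sym_diff A B = sym_diff A' B'"
    by (metis Un_commute doubleton_eq_iff)
  ultimately show "sym_diff A B \<in> E"
    by simp
next
  assume "sym_diff A B \<in> E"
  then show "{A, B} \<in> token_edges V E k"
    unfolding token_edges_def mem_Collect_eq using assms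
    by (intro exI[of _ A] exI[of _ B] conjI refl)
qed

lemma image_token_vertices:
  assumes "bij_betw f V W"
  shows "image f ` token_vertices V k = token_vertices W k"
proof -
  have inj: "inj_on f V" and W: "W = f ` V"
    using assms by (auto simp: bij_betw_def)
  have "card (f ` A) = card A" if "A \<subseteq> V" for A
    using inj that by (meson card_image inj_on_subset)
  then show ?thesis
    unfolding token_vertices_def W by (auto elim!: subset_imageE)
qed

lemma bij_betw_image_token_vertices:
  assumes "bij_betw f V W"
  shows "bij_betw (image f) (token_vertices V k) (token_vertices W k)"
  by (rule bij_betw_subset[OF bij_betw_image_Pow[OF assms] _ image_token_vertices[OF assms]])
    (auto simp: token_vertices_def)

lemma image_symmetric_difference:
  assumes "inj_on f V" "A \<subseteq> V" "B \<subseteq> V"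
  shows "f ` (sym_diff A B) = sym_diff (f ` A) (f ` B)"
proof -
  have "A - B \<subseteq> V" "B - A \<subseteq> V"
    using assms(2,3) by auto
  then show ?thesis
    using assms by (simp add: image_Un inj_on_image_set_diff)
qed

lemma graph_iso_image_edge_iff:
  assumes "graph_iso V1 E1 V2 E2 f" "graph V1 E1" "graph V2 E2" "C \<subseteq> V1"
  shows "C \<in> E1 \<longleftrightarrow> f ` C \<in> E2"
proof -
  have inj: "inj_on f V1"
    using assms(1) by (simp add: graph_iso_def bij_betw_def)
  have "card (f ` C) = card C"
    using inj assms(4) by (meson card_image inj_on_subset)
  then have "card C = 2" if "C \<in> E1 \<or> f ` C \<in> E2"
    using that assms(2,3) by (auto simp: graph_def)
  then show ?thesis
    using assms(1,4) by (auto simp: card_2_iff graph_iso_def)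
qed

lemma obtain_subset_with_card_containing:
  assumes "finite V" "w \<in> V" "1 \<le> k" "k \<le> card V"
  obtains A where "A \<subseteq> V" "card A = k" "w \<in> A"
proof -
  have "k - 1 \<le> card (V - {w})"
    using assms by (simp add: card_Diff_singleton)
  then obtain S where S: "S \<subseteq> V - {w}" "card S = k - 1"
    by (meson obtain_subset_with_card_n)
  moreover have "finite S"
    using S(1) assms(1) finite_subset by blast
  ultimately have "card (insert w S) = k"
    using assms(3) by (simp add: subset_Diff_insert)
  then show thesis
    using that[of "insert w S"] S(1) assms(2) by blast
qed

lemma obtain_token_vertices_with_symmetric_difference:
  assumes "finite V" "u \<in> V" "v \<in> V" "u \<noteq> v" "1 \<le> k" "k < card V"
  obtains A B where "A \<subseteq> V" "card A = k" "B \<subseteq> V" "card B = k" "A - B = {u}" "B - A = {v}"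
proof -
  have "k \<le> card (V - {v})"
    using assms by (simp add: card_Diff_singleton)
  then obtain A where A: "A \<subseteq> V - {v}" "card A = k" "u \<in> A"
    using obtain_subset_with_card_containing[of "V - {v}" u k] assms by auto
  have "finite A"
    using A(1) assms(1) finite_subset by blast
  then have "card (insert v (A - {u})) = k"
    using A assms(5) by (simp add: card_Diff_singleton subset_Diff_insert)
  then show thesis
    using that[of A "insert v (A - {u})"] A assms(3,4) by auto
qed

lemma token_reconstructionD:
  assumes "token_reconstruction VF EF k V E phi"
  shows token_reconstruction_graph: "graph V E"
    and token_reconstruction_bij: "bij_betw phi VF (token_vertices V k)"
  using assms by (simp_all add: token_reconstruction_def graph_iso_def)

lemma token_reconstruction_token_vertex:
  assumes "token_reconstruction VF EF k V E phi" "x \<in> VF"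
  shows "phi x \<subseteq> V" "card (phi x) = k"
  using bij_betw_apply[OF token_reconstruction_bij[OF assms(1)] assms(2)]
  by (simp_all add: token_vertices_def)

lemma token_reconstruction_surj:
  assumes "token_reconstruction VF EF k V E phi" "A \<subseteq> V" "card A = k"
  obtains x where "x \<in> VF" "phi x = A"
proof -
  have "A \<in> phi ` VF"
    using bij_betw_imp_surj_on[OF token_reconstruction_bij[OF assms(1)]] assms(2,3)
    by (simp add: token_vertices_def)
  then show thesis
    using that by blast
qed

lemma token_reconstruction_edge_iff:
  assumes "token_reconstruction VF EF k V E phi" "x \<in> VF" "y \<in> VF"
  shows "{x, y} \<in> EF \<longleftrightarrow> sym_diff (phi x) (phi y) \<in> E"
proof -
  have "phi x \<in> token_vertices V k" "phi y \<in> token_vertices V k"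
    using assms by (auto intro: bij_betw_apply[OF token_reconstruction_bij])
  moreover have "{x, y} \<in> EF \<longleftrightarrow> {phi x, phi y} \<in> token_edges V E k"
    using assms by (simp add: token_reconstruction_def graph_iso_def)
  ultimately show ?thesis
    by (simp add: doubleton_in_token_edges_iff)
qed

lemma recon_sets_eq:
  assumes "token_reconstruction VF EF k V E phi"
  shows "recon_sets VF k V phi = (\<lambda>u. {x \<in> VF. u \<in> phi x}) ` V"
  using token_reconstruction_token_vertex[OF assms]
  unfolding recon_sets_def kappa_def token_vertices_def by blast

lemma token_reconstruction_separates:
  assumes "token_reconstruction VF EF k V E phi" "1 \<le> k" "k < card V"
  shows "inj_on (\<lambda>u. {x \<in> VF. u \<in> phi x}) V"
proof (rule inj_onI, rule ccontr)
  fix u v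
  assume uv: "u \<in> V" "v \<in> V" "u \<noteq> v" and eq: "{x \<in> VF. u \<in> phi x} = {x \<in> VF. v \<in> phi x}"
  have "finite V"
    using token_reconstruction_graph[OF assms(1)] by (simp add: graph_def)
  then have "k \<le> card (V - {v})"
    using uv assms(3) by (simp add: card_Diff_singleton)
  then obtain A where A: "A \<subseteq> V - {v}" "card A = k" "u \<in> A"
    using obtain_subset_with_card_containing[of "V - {v}" u k] \<open>finite V\<close> uv assms(2) by auto
  then obtain x where "x \<in> VF" "phi x = A"
    using token_reconstruction_surj[OF assms(1)] by blast
  then show False
    using eq A by blast
qed

lemma token_reconstruction_Union:
  assumes "token_reconstruction VF EF k V E phi" "1 \<le> k" "k \<le> card V"
  shows "\<Union> (phi ` VF) = V"
proof (intro equalityI subsetI)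
  fix w
  assume "w \<in> V"
  moreover have "finite V"
    using token_reconstruction_graph[OF assms(1)] by (simp add: graph_def)
  ultimately obtain A where "A \<subseteq> V" "card A = k" "w \<in> A"
    using obtain_subset_with_card_containing assms(2,3) by metis
  then show "w \<in> \<Union> (phi ` VF)"
    using token_reconstruction_surj[OF assms(1)] by (metis UN_iff)
qed (use token_reconstruction_token_vertex[OF assms(1)] in auto)

lemma graph_iso_induces_automorphism:
  assumes G: "token_reconstruction VF EF k VG EG varphi"
    and H: "token_reconstruction VF EF k VH EH phi"
    and f: "graph_iso VG EG VH EH f"
  obtains psi where "graph_iso VF EF VF EF psi" "\<And>x. x \<in> VF \<Longrightarrow> phi (psi x) = f ` varphi x"
proof -
  have bij_f: "bij_betw f VG VH"
    using f by (simp add: graph_iso_def)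
  define psi where "psi = inv_into VF phi \<circ> image f \<circ> varphi"
  have bij_psi: "bij_betw psi VF VF"
    unfolding psi_def
    by (rule bij_betw_trans[OF token_reconstruction_bij[OF G] bij_betw_trans[OF
          bij_betw_image_token_vertices[OF bij_f] bij_betw_inv_into[OF token_reconstruction_bij[OF H]]]])
  have induced: "phi (psi x) = f ` varphi x" if "x \<in> VF" for x
  proof -
    have "f ` varphi x \<in> phi ` VF"
      using that bij_betw_apply[OF bij_betw_image_token_vertices[OF bij_f]]
        bij_betw_apply[OF token_reconstruction_bij[OF G]] bij_betw_imp_surj_on[OF token_reconstruction_bij[OF H]]
      by fastforce
    then show ?thesis
      by (simp add: psi_def f_inv_into_f)
  qed
  have edges: "{x, y} \<in> EF \<longleftrightarrow> {psi x, psi y} \<in> EF" if xy: "x \<in> VF" "y \<in> VF" for x y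
  proof -
    have sub: "varphi x \<subseteq> VG" "varphi y \<subseteq> VG"
      using token_reconstruction_token_vertex[OF G] xy by auto
    have "{x, y} \<in> EF \<longleftrightarrow> sym_diff (varphi x) (varphi y) \<in> EG"
      by (rule token_reconstruction_edge_iff[OF G xy])
    also have "\<dots> \<longleftrightarrow> f ` sym_diff (varphi x) (varphi y) \<in> EH"
      using sub by (intro graph_iso_image_edge_iff[OF f token_reconstruction_graph[OF G]
            token_reconstruction_graph[OF H]]) auto
    also have "f ` sym_diff (varphi x) (varphi y) = sym_diff (phi (psi x)) (phi (psi y))"
      using image_symmetric_difference[OF bij_betw_imp_inj_on[OF bij_f] sub] induced xy by simp
    also have "\<dots> \<in> EH \<longleftrightarrow> {psi x, psi y} \<in> EF"
      using token_reconstruction_edge_iff[OF H] bij_betw_apply[OF bij_psi] xy by simp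
    finally show ?thesis .
  qed
  have "graph_iso VF EF VF EF psi"
    using bij_psi edges by (simp add: graph_iso_def)
  then show thesis
    using induced by (rule that)
qed

lemma recon_sets_image_of_induced:
  assumes G: "token_reconstruction VF EF k VG EG varphi"
    and H: "token_reconstruction VF EF k VH EH phi"
    and f: "bij_betw f VG VH" and psi: "bij_betw psi VF VF"
    and induced: "\<And>x. x \<in> VF \<Longrightarrow> phi (psi x) = f ` varphi x"
  shows "recon_sets VF k VH phi = image psi ` recon_sets VF k VG varphi"
proof -
  have inj: "inj_on f VG"
    using f by (rule bij_betw_imp_inj_on)
  have class_image: "psi ` {x \<in> VF. u \<in> varphi x} = {y \<in> VF. f u \<in> phi y}" if "u \<in> VG" for u
  proof (intro equalityI subsetI)
    fix y
    assume "y \<in> {y \<in> VF. f u \<in> phi y}"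
    moreover then obtain x where "x \<in> VF" "y = psi x"
      using bij_betw_imp_surj_on[OF psi] by blast
    moreover have "varphi x \<subseteq> VG"
      using token_reconstruction_token_vertex[OF G \<open>x \<in> VF\<close>] by simp
    ultimately show "y \<in> psi ` {x \<in> VF. u \<in> varphi x}"
      using induced inj_on_image_mem_iff[OF inj \<open>u \<in> VG\<close>] by auto
  qed (use induced bij_betw_apply[OF psi] in auto)
  have "recon_sets VF k VH phi = (\<lambda>w. {y \<in> VF. w \<in> phi y}) ` f ` VG"
    using recon_sets_eq[OF H] bij_betw_imp_surj_on[OF f] by simp
  also have "\<dots> = (\<lambda>u. psi ` {x \<in> VF. u \<in> varphi x}) ` VG"
    using class_image by (simp add: image_image)
  also have "\<dots> = image psi ` recon_sets VF k VG varphi"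
    using recon_sets_eq[OF G] by (simp add: image_image)
  finally show ?thesis .
qed

lemma token_image_eq_if_classes_correspond:
  assumes G: "token_reconstruction VF EF k VG EG varphi"
    and H: "token_reconstruction VF EF k VH EH phi"
    and inj: "inj_on f VG"
    and classes: "\<And>u. u \<in> VG \<Longrightarrow> psi ` {x \<in> VF. u \<in> varphi x} = {y \<in> VF. f u \<in> phi y}"
    and x: "x \<in> VF" "psi x \<in> VF"
  shows "phi (psi x) = f ` varphi x"
proof (rule card_subset_eq[symmetric])
  show "finite (phi (psi x))"
    using token_reconstruction_graph[OF H] token_reconstruction_token_vertex[OF H x(2)]
    by (auto simp: graph_def intro: finite_subset)
  show "f ` varphi x \<subseteq> phi (psi x)"
    using classes token_reconstruction_token_vertex[OF G x(1)] x(1) by blast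
  show "card (f ` varphi x) = card (phi (psi x))"
    using token_reconstruction_token_vertex[OF G x(1)] token_reconstruction_token_vertex[OF H x(2)]
      inj by (simp add: card_image inj_on_subset)
qed

lemma induced_bijection_of_recon_sets:
  assumes G: "token_reconstruction VF EF k VG EG varphi"
    and H: "token_reconstruction VF EF k VH EH phi"
    and k: "1 \<le> k" "k < card VG"
    and psi: "bij_betw psi VF VF"
    and R: "recon_sets VF k VH phi = image psi ` recon_sets VF k VG varphi"
  obtains f where "bij_betw f VG VH" "\<And>x. x \<in> VF \<Longrightarrow> phi (psi x) = f ` varphi x"
proof -
  define X where "X u = {x \<in> VF. u \<in> varphi x}" for u
  define Y where "Y w = {y \<in> VF. w \<in> phi y}" for w
  have "Y ` VH = (\<lambda>u. psi ` X u) ` VG"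
    using R unfolding recon_sets_eq[OF G] recon_sets_eq[OF H] image_image X_def Y_def .
  then have "\<forall>u\<in>VG. \<exists>w. w \<in> VH \<and> psi ` X u = Y w"
    by (metis (no_types, lifting) imageE imageI)
  then obtain f where f: "\<And>u. u \<in> VG \<Longrightarrow> f u \<in> VH" "\<And>u. u \<in> VG \<Longrightarrow> psi ` X u = Y (f u)"
    by metis
  have "inj_on f VG"
  proof (rule inj_onI)
    fix u v
    assume "u \<in> VG" "v \<in> VG" "f u = f v"
    then have "psi ` X u = psi ` X v"
      using f(2) by simp
    moreover have "X u \<subseteq> VF" "X v \<subseteq> VF"
      by (auto simp: X_def)
    ultimately have "X u = X v"
      using inj_on_image_eq_iff[OF bij_betw_imp_inj_on[OF psi]] by blast
    then show "u = v"
      using inj_onD[OF token_reconstruction_separates[OF G k]] \<open>u \<in> VG\<close> \<open>v \<in> VG\<close>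
      by (simp add: X_def)
  qed
  have induced: "phi (psi x) = f ` varphi x" if "x \<in> VF" for x
    using token_image_eq_if_classes_correspond[OF G H \<open>inj_on f VG\<close>] f(2) that
      bij_betw_apply[OF psi] by (simp add: X_def Y_def)
  have "card VG \<le> card VH"
    using \<open>inj_on f VG\<close> f(1) token_reconstruction_graph[OF H]
    by (intro card_inj_on_le) (auto simp: graph_def)
  then have "VH = \<Union> (phi ` psi ` VF)"
    using token_reconstruction_Union[OF H] k bij_betw_imp_surj_on[OF psi] by simp
  also have "\<dots> = f ` \<Union> (varphi ` VF)"
    using induced by (simp add: image_image image_UN)
  also have "\<dots> = f ` VG"
    using token_reconstruction_Union[OF G] k by simp
  finally have "bij_betw f VG VH"
    using \<open>inj_on f VG\<close> by (simp add: bij_betw_def)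
  then show thesis
    using induced by (rule that)
qed

lemma graph_iso_of_induced:
  assumes G: "token_reconstruction VF EF k VG EG varphi"
    and H: "token_reconstruction VF EF k VH EH phi"
    and k: "1 \<le> k" "k < card VG"
    and psi: "graph_iso VF EF VF EF psi"
    and f: "bij_betw f VG VH"
    and induced: "\<And>x. x \<in> VF \<Longrightarrow> phi (psi x) = f ` varphi x"
  shows "graph_iso VG EG VH EH f"
proof -
  have edge_iff: "{u, v} \<in> EG \<longleftrightarrow> {f u, f v} \<in> EH" if uv: "u \<in> VG" "v \<in> VG" "u \<noteq> v" for u v
  proof -
    obtain A B where AB: "A \<subseteq> VG" "card A = k" "B \<subseteq> VG" "card B = k" "A - B = {u}" "B - A = {v}"
      using obtain_token_vertices_with_symmetric_difference[OF _ uv k]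
        token_reconstruction_graph[OF G] by (auto simp: graph_def)
    obtain x y where xy: "x \<in> VF" "varphi x = A" "y \<in> VF" "varphi y = B"
      using token_reconstruction_surj[OF G] AB by metis
    have psi_xy: "psi x \<in> VF" "psi y \<in> VF"
      using psi xy by (auto simp: graph_iso_def bij_betw_apply)
    have "{u, v} \<in> EG \<longleftrightarrow> {x, y} \<in> EF"
      using token_reconstruction_edge_iff[OF G xy(1,3)] xy AB by (simp add: insert_commute)
    also have "\<dots> \<longleftrightarrow> {psi x, psi y} \<in> EF"
      using psi xy by (simp add: graph_iso_def)
    also have "\<dots> \<longleftrightarrow> f ` sym_diff A B \<in> EH"
      using token_reconstruction_edge_iff[OF H psi_xy] induced xy
        image_symmetric_difference[OF bij_betw_imp_inj_on[OF f] AB(1,3)] by simp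
    also have "f ` sym_diff A B = {f u, f v}"
      using AB by auto
    finally show ?thesis .
  qed
  moreover have "{u} \<notin> EG" "{f u} \<notin> EH" for u
    using token_reconstruction_graph[OF G] token_reconstruction_graph[OF H]
    by (auto simp: graph_def)
  ultimately show ?thesis
    using f unfolding graph_iso_def by (metis insert_absorb2)
qed

theorem proposition15:
  fixes VF :: "'f set" and EF :: "'f set set"
    and VG :: "'g set" and EG :: "'g set set"
    and VH :: "'h set" and EH :: "'h set set"
    and varphi :: "'f \<Rightarrow> 'g set" and phi :: "'f \<Rightarrow> 'h set"
    and k :: nat
  assumes "graph VF EF"
    and "token_reconstruction VF EF k VG EG varphi"
    and "token_reconstruction VF EF k VH EH phi"
    and "1 \<le> k" and "k < card VG"
  shows "graph_isomorphic VG EG VH EH \<longleftrightarrow>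
    (\<exists>psi. graph_iso VF EF VF EF psi \<and>
       recon_sets VF k VH phi = (\<lambda>X. psi ` X) ` recon_sets VF k VG varphi)"
proof
  assume "graph_isomorphic VG EG VH EH"
  then obtain f where f: "graph_iso VG EG VH EH f"
    unfolding graph_isomorphic_def by blast
  obtain psi where psi: "graph_iso VF EF VF EF psi"
    and induced: "\<And>x. x \<in> VF \<Longrightarrow> phi (psi x) = f ` varphi x"
    using graph_iso_induces_automorphism[OF assms(2,3) f] by blast
  moreover have "recon_sets VF k VH phi = image psi ` recon_sets VF k VG varphi"
    using recon_sets_image_of_induced[OF assms(2,3) _ _ induced] f psi
    by (simp add: graph_iso_def)
  ultimately show "\<exists>psi. graph_iso VF EF VF EF psi \<and>
      recon_sets VF k VH phi = (\<lambda>X. psi ` X) ` recon_sets VF k VG varphi"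
    by blast
next
  assume "\<exists>psi. graph_iso VF EF VF EF psi \<and>
      recon_sets VF k VH phi = (\<lambda>X. psi ` X) ` recon_sets VF k VG varphi"
  then obtain psi where psi: "graph_iso VF EF VF EF psi"
    and R: "recon_sets VF k VH phi = image psi ` recon_sets VF k VG varphi"
    by blast
  obtain f where "bij_betw f VG VH" "\<And>x. x \<in> VF \<Longrightarrow> phi (psi x) = f ` varphi x"
    using induced_bijection_of_recon_sets[OF assms(2-5) _ R] psi by (auto simp: graph_iso_def)
  then have "graph_iso VG EG VH EH f"
    by (rule graph_iso_of_induced[OF assms(2-5) psi])
  then show "graph_isomorphic VG EG VH EH"
    unfolding graph_isomorphic_def by blast
qed

end
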